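(* For $n\ge1$, the subleading coefficient $p(n,\vec t)$ of $P_n$ satisfies \[ p(n,\vec t)=\sum_{k=1}^m t_kr_{n,k}-\beta_n=-\sum_{k=1}^m t_k\sum_{j=0}^{n-1}R_{j,k}-n(n+\alpha). \]
   Context: Let $m\ge1$, $\alpha>-1$, $0<t_1<\dots<t_m$, real $\omega_0,\dots,\omega_m$ with $\sum_{k=0}^\ell\omega_k\ge0$ for $\ell=0,\dots,m$, $\theta$ the Heaviside function, $w_0(x)=x^\alpha e^{-x}$, $w(x;\vec t)=w_0(x)\big(\omega_0+\sum_k\omega_k\theta(x-t_k)\big)$ on $[0,\infty)$, $P_n(x;\vec t)=x^n+p(n,\vec t)x^{n-1}+\dots$ the monic orthogonal polynomials w.r.t. $w$, $h_n=\int_0^\infty P_n^2w\,dx$, $\beta_n=h_n/h_{n-1}$, $R_{n,k}=\omega_k\frac{w_0(t_k)}{h_n}P_n^2(t_k)$, $r_{n,k}=\omega_k\frac{w_0(t_k)}{h_{n-1}}P_n(t_k)P_{n-1}(t_k)$. *)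

theory Defs
  imports "HOL-Analysis.Analysis" "HOL-Computational_Algebra.Polynomial"
begin

text \<open>Heaviside step function (the value at 0 is irrelevant for all integrals below).\<close>
definition heaviside :: "real \<Rightarrow> real" where
  "heaviside x = (if x \<ge> 0 then 1 else 0)"

definition w0 :: "real \<Rightarrow> real \<Rightarrow> real" where
  "w0 \<alpha> x = x powr \<alpha> * exp (- x)"

definition wt :: "real \<Rightarrow> nat \<Rightarrow> (nat \<Rightarrow> real) \<Rightarrow> (nat \<Rightarrow> real) \<Rightarrow> real \<Rightarrow> real" where
  "wt \<alpha> m \<omega> t x = w0 \<alpha> x * (\<omega> 0 + (\<Sum>k=1..m. \<omega> k * heaviside (x - t k)))"

definition monic_OPS :: "real \<Rightarrow> nat \<Rightarrow> (nat \<Rightarrow> real) \<Rightarrow> (nat \<Rightarrow> real) \<Rightarrow> (nat \<Rightarrow> real poly) \<Rightarrow> bool" where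
  "monic_OPS \<alpha> m \<omega> t P \<longleftrightarrow>
     (\<forall>n. degree (P n) = n \<and> lead_coeff (P n) = 1 \<and>
        (\<forall>j<n. (LBINT x:{0..}. poly (P n) x * x ^ j * wt \<alpha> m \<omega> t x) = 0))"

definition hn :: "real \<Rightarrow> nat \<Rightarrow> (nat \<Rightarrow> real) \<Rightarrow> (nat \<Rightarrow> real) \<Rightarrow> (nat \<Rightarrow> real poly) \<Rightarrow> nat \<Rightarrow> real" where
  "hn \<alpha> m \<omega> t P n = (LBINT x:{0..}. (poly (P n) x)\<^sup>2 * wt \<alpha> m \<omega> t x)"

definition betan :: "real \<Rightarrow> nat \<Rightarrow> (nat \<Rightarrow> real) \<Rightarrow> (nat \<Rightarrow> real) \<Rightarrow> (nat \<Rightarrow> real poly) \<Rightarrow> nat \<Rightarrow> real" where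
  "betan \<alpha> m \<omega> t P n = hn \<alpha> m \<omega> t P n / hn \<alpha> m \<omega> t P (n - 1)"

definition Rnk :: "real \<Rightarrow> nat \<Rightarrow> (nat \<Rightarrow> real) \<Rightarrow> (nat \<Rightarrow> real) \<Rightarrow> (nat \<Rightarrow> real poly) \<Rightarrow> nat \<Rightarrow> nat \<Rightarrow> real" where
  "Rnk \<alpha> m \<omega> t P n k = \<omega> k * w0 \<alpha> (t k) / hn \<alpha> m \<omega> t P n * (poly (P n) (t k))\<^sup>2"

definition rnk :: "real \<Rightarrow> nat \<Rightarrow> (nat \<Rightarrow> real) \<Rightarrow> (nat \<Rightarrow> real) \<Rightarrow> (nat \<Rightarrow> real poly) \<Rightarrow> nat \<Rightarrow> nat \<Rightarrow> real" where
  "rnk \<alpha> m \<omega> t P n k = \<omega> k * w0 \<alpha> (t k) / hn \<alpha> m \<omega> t P (n - 1) * poly (P n) (t k) * poly (P (n - 1)) (t k)"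

end

theory Submission
  imports Defs "HOL-Real_Asymp.Real_Asymp"
begin

text \<open>Write \<open>L Q\<close> for \<open>\<integral>\<^sub>0\<^sup>\<infinity> Q w\<close>. Since \<open>(x^(\<alpha>+1) e^(-x) Q)' = w\<^sub>0 (x Q' + (\<alpha>+1) Q - x Q)\<close>,
  integrating over \<open>[0,\<infinity>)\<close> and over each \<open>[t\<^sub>k,\<infinity>)\<close> shows that \<open>L\<close> maps
  \<open>x Q' + (\<alpha>+1) Q - x Q\<close> to the boundary terms \<open>-\<Sum>\<^sub>k \<omega>\<^sub>k t\<^sub>k w\<^sub>0(t\<^sub>k) Q(t\<^sub>k)\<close>.
  For \<open>Q = P\<^sub>n P\<^sub>n\<^sub>-\<^sub>1\<close> orthogonality reduces the left-hand side to \<open>-p(n) h\<^sub>n\<^sub>-\<^sub>1 - h\<^sub>n\<close>,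
  which is the first formula. For \<open>Q = P\<^sub>j\<^sup>2\<close> it gives
  \<open>p(j+1) - p(j) = -(2j+\<alpha>+1) - \<Sum>\<^sub>k t\<^sub>k R\<^sub>j\<^sub>,\<^sub>k\<close>, which telescopes to the second.
  Dividing by \<open>h\<^sub>j\<close> is legitimate because the weight is nonnegative and positive on an interval.\<close>

lemma set_integrable_powr_exp_neg:
  fixes a :: real
  assumes "a > -1"
  shows "set_integrable lborel {0..} (\<lambda>x. x powr a * exp (- x))"
proof -
  have "((\<lambda>x. x powr (a + 1 - 1) / exp x) has_integral Gamma (a + 1)) {0..}"
    by (rule Gamma_integral_real) (use assms in auto)
  then have "(\<lambda>x. x powr a * exp (- x)) integrable_on {0..}"
    by (simp add: exp_minus field_simps integrable_on_def) blast
  then have "(\<lambda>x. x powr a * exp (- x)) absolutely_integrable_on {0..}"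
    by (subst absolutely_integrable_on_iff_nonneg) auto
  then show ?thesis
    unfolding set_integrable_def by (subst (asm) integrable_completion) auto
qed

lemma set_integrable_sum:
  fixes f :: "'i \<Rightarrow> 'a \<Rightarrow> 'b::{banach, second_countable_topology}"
  assumes "\<And>i. i \<in> I \<Longrightarrow> set_integrable M A (f i)"
  shows "set_integrable M A (\<lambda>x. \<Sum>i\<in>I. f i x)"
proof -
  have "integrable M (\<lambda>x. \<Sum>i\<in>I. indicator A x *\<^sub>R f i x)"
    using assms unfolding set_integrable_def by (intro Bochner_Integration.integrable_sum)
  then show ?thesis
    unfolding set_integrable_def by (simp add: scaleR_sum_right)
qed

lemma poly_mult_w0_eq_sum:
  assumes "x \<ge> 0"
  shows "poly Q x * w0 \<alpha> x = (\<Sum>i\<le>degree Q. coeff Q i * (x powr (\<alpha> + real i) * exp (- x)))"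
proof -
  have "x ^ i * x powr \<alpha> = x powr (\<alpha> + real i)" for i
    using assms by (cases "x = 0") (simp_all add: powr_add powr_realpow)
  then show ?thesis
    unfolding poly_altdef w0_def sum_distrib_right by (intro sum.cong) (auto simp: mult_ac)
qed

lemma set_integrable_poly_w0:
  assumes "c \<ge> 0" "\<alpha> > -1"
  shows "set_integrable lborel {c..} (\<lambda>x. poly Q x * w0 \<alpha> x)"
proof -
  have "set_integrable lborel {0..}
          (\<lambda>x. \<Sum>i\<le>degree Q. coeff Q i * (x powr (\<alpha> + real i) * exp (- x)))"
    using assms by (intro set_integrable_sum set_integrable_mult_right set_integrable_powr_exp_neg) auto
  then have "set_integrable lborel {0..} (\<lambda>x. poly Q x * w0 \<alpha> x)"
    by (rule iffD1[OF set_integrable_cong, rotated 3]) (auto simp: poly_mult_w0_eq_sum)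
  then show ?thesis
    by (rule set_integrable_subset) (use assms in auto)
qed

text \<open>\<open>(x^(\<alpha>+1) e^(-x) Q(x))' = w\<^sub>0(x) \<cdot> (lag_deriv_poly \<alpha> Q)(x)\<close>\<close>
definition lag_deriv_poly :: "real \<Rightarrow> real poly \<Rightarrow> real poly" where
  "lag_deriv_poly \<alpha> Q = pCons 0 (pderiv Q) + smult (\<alpha> + 1) Q - pCons 0 Q"

lemma lag_deriv_poly_mult:
  "lag_deriv_poly \<alpha> (p * q) =
     q * pCons 0 (pderiv p) + p * pCons 0 (pderiv q) + smult (\<alpha> + 1) (p * q) - p * pCons 0 q"
  unfolding lag_deriv_poly_def pderiv_mult by (simp add: algebra_simps)

lemma has_real_derivative_powr_exp_poly:
  fixes \<alpha> x :: real
  assumes "x > 0"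
  shows "((\<lambda>x. x powr (\<alpha> + 1) * exp (- x) * poly Q x)
           has_real_derivative (poly (lag_deriv_poly \<alpha> Q) x * w0 \<alpha> x)) (at x)"
proof -
  have "((\<lambda>x. x powr (\<alpha> + 1) * exp (- x) * poly Q x) has_real_derivative
          (\<alpha> + 1) * x powr \<alpha> * exp (- x) * poly Q x - x powr (\<alpha> + 1) * exp (- x) * poly Q x
          + x powr (\<alpha> + 1) * exp (- x) * poly (pderiv Q) x) (at x)"
    using assms by (auto intro!: derivative_eq_intros simp: algebra_simps)
  moreover have "x powr (\<alpha> + 1) = x * x powr \<alpha>"
    using assms by (simp add: powr_add)
  ultimately show ?thesis
    by (simp add: lag_deriv_poly_def w0_def algebra_simps)
qed

lemma tendsto_powr_exp_poly_at_top:
  fixes \<alpha> :: real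
  shows "((\<lambda>x. x powr (\<alpha> + 1) * exp (- x) * poly Q x) \<longlongrightarrow> 0) at_top"
proof -
  have "((\<lambda>x. \<Sum>i\<le>degree Q. coeff Q i * (x powr (\<alpha> + 1 + real i) * exp (- x)))
          \<longlongrightarrow> (\<Sum>i\<le>degree Q. coeff Q i * 0)) at_top"
    by (intro tendsto_sum tendsto_mult tendsto_const) real_asymp
  moreover have "\<forall>\<^sub>F x in at_top. (\<Sum>i\<le>degree Q. coeff Q i * (x powr (\<alpha> + 1 + real i) * exp (- x)))
                    = x powr (\<alpha> + 1) * exp (- x) * poly Q x"
    using eventually_gt_at_top[of 0]
  proof eventually_elim
    case (elim x)
    then show ?case
      unfolding poly_altdef sum_distrib_left
      by (intro sum.cong) (auto simp: powr_add powr_realpow mult_ac)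
  qed
  ultimately show ?thesis
    by (auto intro: Lim_transform_eventually)
qed

lemma tendsto_powr_exp_poly_at_right:
  fixes c :: real
  assumes "c \<ge> 0" "\<alpha> > -1"
  shows "((\<lambda>x. x powr (\<alpha> + 1) * exp (- x) * poly Q x)
           \<longlongrightarrow> c powr (\<alpha> + 1) * exp (- c) * poly Q c) (at_right c)"
proof (cases "c = 0")
  case True
  have "((\<lambda>x. x powr (\<alpha> + 1)) \<longlongrightarrow> 0) (at_right 0)"
  proof (rule tendsto_zero_powrI[where f="\<lambda>x. x" and g="\<lambda>x. \<alpha> + 1"])
    show "\<forall>\<^sub>F x in at_right 0. 0 \<le> (x::real)"
      by (rule eventually_at_rightI[of 0 1]) auto
  qed (use assms in \<open>auto intro!: tendsto_eq_intros\<close>)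
  then have "((\<lambda>x. x powr (\<alpha> + 1) * exp (- x) * poly Q x) \<longlongrightarrow> 0 * exp (- 0) * poly Q 0) (at_right 0)"
    by (intro tendsto_intros)
  then show ?thesis
    using True by simp
next
  case False
  then have "isCont (\<lambda>x. x powr (\<alpha> + 1) * exp (- x) * poly Q x) c"
    by (auto intro!: continuous_intros)
  then show ?thesis
    by (simp add: isCont_def filterlim_at_split)
qed

lemma set_integral_lag_deriv_poly:
  fixes c :: real
  assumes c: "c \<ge> 0" and \<alpha>: "\<alpha> > -1"
  shows "(LBINT x:{c..}. poly (lag_deriv_poly \<alpha> Q) x * w0 \<alpha> x) = - (c * w0 \<alpha> c * poly Q c)"
proof -
  define f where "f x = poly (lag_deriv_poly \<alpha> Q) x * w0 \<alpha> x" for x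
  define F where "F x = x powr (\<alpha> + 1) * exp (- x) * poly Q x" for x :: real
  have int: "set_integrable lborel {c..} f"
    unfolding f_def by (rule set_integrable_poly_w0[OF c \<alpha>])
  have int_open: "set_integrable lborel {c<..} f"
    by (rule set_integrable_subset[OF int]) auto
  have "(LBINT x:{c..}. f x) = (LBINT x:{c<..}. f x)"
  proof (rule set_integral_cong_set)
    show "set_borel_measurable lborel {c<..} f" "set_borel_measurable lborel {c..} f"
      using int int_open unfolding set_integrable_def set_borel_measurable_def
      by (auto intro: borel_measurable_integrable)
    show "AE x in lborel. (x \<in> {c<..}) = (x \<in> {c..})"
      using AE_lborel_singleton[of c] by eventually_elim auto
  qed
  also have "\<dots> = (LBINT x=ereal c..\<infinity>. f x)"
    by (rule interval_integral_to_infinity_eq[symmetric])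
  also have "\<dots> = 0 - F c"
  proof (rule interval_integral_FTC_integrable)
    fix x assume "ereal c < ereal x"
    then have x: "x > 0"
      using c by auto
    show "(F has_vector_derivative f x) (at x)"
      unfolding F_def f_def using has_real_derivative_powr_exp_poly[OF x]
      by (simp add: has_real_derivative_iff_has_vector_derivative)
    show "isCont f x"
      unfolding f_def w0_def using x by (auto intro!: continuous_intros)
  next
    show "set_integrable lborel (einterval (ereal c) \<infinity>) f"
      using int_open by simp
    show "((F \<circ> real_of_ereal) \<longlongrightarrow> F c) (at_right (ereal c))"
      unfolding ereal_tendsto_simps1 F_def by (rule tendsto_powr_exp_poly_at_right[OF c \<alpha>])
    show "((F \<circ> real_of_ereal) \<longlongrightarrow> 0) (at_left \<infinity>)"
      unfolding ereal_tendsto_simps1 F_def by (rule tendsto_powr_exp_poly_at_top)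
  qed simp
  also have "F c = c * w0 \<alpha> c * poly Q c"
    unfolding F_def w0_def using c by (cases "c = 0") (simp_all add: powr_add)
  finally show ?thesis
    by (simp add: f_def)
qed

definition wt_integral :: "real \<Rightarrow> nat \<Rightarrow> (nat \<Rightarrow> real) \<Rightarrow> (nat \<Rightarrow> real) \<Rightarrow> real poly \<Rightarrow> real" where
  "wt_integral \<alpha> m \<omega> t Q = (LBINT x:{0..}. poly Q x * wt \<alpha> m \<omega> t x)"

lemma indicator_mult_wt_eq:
  assumes "\<And>k. k \<in> {1..m} \<Longrightarrow> t k \<ge> 0"
  shows "indicator {0..} x * wt \<alpha> m \<omega> t x =
           \<omega> 0 * (indicator {0..} x * w0 \<alpha> x) + (\<Sum>k=1..m. \<omega> k * (indicator {t k..} x * w0 \<alpha> x))"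
proof (cases "x \<ge> 0")
  case True
  have "heaviside (x - t k) = indicator {t k..} x" for k
    by (simp add: heaviside_def indicator_def)
  then have "(\<Sum>k=1..m. \<omega> k * (indicator {t k..} x * w0 \<alpha> x)) =
               w0 \<alpha> x * (\<Sum>k=1..m. \<omega> k * heaviside (x - t k))"
    unfolding sum_distrib_left by (intro sum.cong refl) (simp add: mult_ac)
  then show ?thesis
    using True unfolding wt_def by (simp add: algebra_simps)
next
  case False
  then have "indicator {t k..} x = (0::real)" if "k \<in> {1..m}" for k
    using assms[OF that] by (simp add: indicator_def)
  then show ?thesis
    using False by simp
qed

lemma wt_eq_w0_partial_sum:
  assumes "l \<le> m" "\<And>k. 1 \<le> k \<Longrightarrow> k \<le> l \<Longrightarrow> t k \<le> x" "\<And>k. l < k \<Longrightarrow> k \<le> m \<Longrightarrow> x < t k"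
  shows "wt \<alpha> m \<omega> t x = w0 \<alpha> x * (\<Sum>k=0..l. \<omega> k)"
proof -
  have "(\<Sum>k=1..m. \<omega> k * heaviside (x - t k)) = (\<Sum>k=1..l. \<omega> k)"
  proof (rule sum.mono_neutral_cong_right)
    show "\<forall>i\<in>{1..m} - {1..l}. \<omega> i * heaviside (x - t i) = 0"
    proof
      fix i assume "i \<in> {1..m} - {1..l}"
      then have "x < t i"
        using assms(3) by auto
      then show "\<omega> i * heaviside (x - t i) = 0"
        by (simp add: heaviside_def)
    qed
    show "\<And>k. k \<in> {1..l} \<Longrightarrow> \<omega> k * heaviside (x - t k) = \<omega> k"
      using assms(2) by (auto simp: heaviside_def)
  qed (use assms(1) in auto)
  moreover have "(\<Sum>k=0..l. \<omega> k) = \<omega> 0 + (\<Sum>k=1..l. \<omega> k)"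
    using sum.atLeast_Suc_atMost[of 0 l \<omega>] by simp
  ultimately show ?thesis
    unfolding wt_def by simp
qed

locale jump_weight =
  fixes \<alpha> :: real and m :: nat and \<omega> t :: "nat \<Rightarrow> real"
  assumes alpha_gt: "\<alpha> > -1" and t_nonneg: "\<And>k. k \<in> {1..m} \<Longrightarrow> t k \<ge> 0"
begin

abbreviation L :: "real poly \<Rightarrow> real" where
  "L \<equiv> wt_integral \<alpha> m \<omega> t"

lemma indicator_mult_poly_wt_eq:
  "indicator {0..} x * (poly Q x * wt \<alpha> m \<omega> t x) =
     \<omega> 0 * (indicator {0..} x * (poly Q x * w0 \<alpha> x))
     + (\<Sum>k=1..m. \<omega> k * (indicator {t k..} x * (poly Q x * w0 \<alpha> x)))"
  using indicator_mult_wt_eq[of m t x \<alpha> \<omega>, OF t_nonneg]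
  by (simp add: sum_distrib_left algebra_simps)

lemma
  shows set_integrable_poly_wt: "set_integrable lborel {0..} (\<lambda>x. poly Q x * wt \<alpha> m \<omega> t x)"
    and wt_integral_eq_w0_integrals:
      "L Q = \<omega> 0 * (LBINT x:{0..}. poly Q x * w0 \<alpha> x)
             + (\<Sum>k=1..m. \<omega> k * (LBINT x:{t k..}. poly Q x * w0 \<alpha> x))"
proof -
  have int0: "integrable lborel (\<lambda>x. indicator {0..} x * (poly Q x * w0 \<alpha> x))"
    using set_integrable_poly_w0[of 0 \<alpha> Q] alpha_gt unfolding set_integrable_def by simp
  have int_t: "integrable lborel (\<lambda>x. indicator {t k..} x * (poly Q x * w0 \<alpha> x))"
    if "k \<in> {1..m}" for k
    using set_integrable_poly_w0[OF t_nonneg[OF that] alpha_gt] unfolding set_integrable_def by simp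
  show "set_integrable lborel {0..} (\<lambda>x. poly Q x * wt \<alpha> m \<omega> t x)"
    unfolding set_integrable_def real_scaleR_def indicator_mult_poly_wt_eq using int0 int_t
    by (intro Bochner_Integration.integrable_add Bochner_Integration.integrable_sum
              integrable_mult_right) auto
  show "L Q = \<omega> 0 * (LBINT x:{0..}. poly Q x * w0 \<alpha> x)
              + (\<Sum>k=1..m. \<omega> k * (LBINT x:{t k..}. poly Q x * w0 \<alpha> x))"
    unfolding wt_integral_def set_lebesgue_integral_def real_scaleR_def indicator_mult_poly_wt_eq
    using int0 int_t
    by (subst Bochner_Integration.integral_add Bochner_Integration.integral_sum integral_mult_right;
        auto intro!: Bochner_Integration.integrable_sum integrable_mult_right)+
qed

lemma wt_integral_add: "L (p + q) = L p + L q"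
  unfolding wt_integral_def using set_integrable_poly_wt[of p] set_integrable_poly_wt[of q]
  by (simp add: distrib_right)

lemma wt_integral_smult: "L (smult c p) = c * L p"
  unfolding wt_integral_def by (simp add: mult.assoc)

lemma wt_integral_diff: "L (p - q) = L p - L q"
  using wt_integral_add[of p "- q"] wt_integral_smult[of "-1" q] by simp

lemma wt_integral_0: "L 0 = 0"
  by (simp add: wt_integral_def)

lemma wt_integral_sum: "L (\<Sum>i\<in>I. f i) = (\<Sum>i\<in>I. L (f i))"
  by (induction I rule: infinite_finite_induct) (simp_all add: wt_integral_add wt_integral_0)

lemma wt_integral_lag_deriv_poly:
  "L (lag_deriv_poly \<alpha> Q) = - (\<Sum>k=1..m. \<omega> k * t k * w0 \<alpha> (t k) * poly Q (t k))"
  using set_integral_lag_deriv_poly[OF _ alpha_gt] t_nonneg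
  by (simp add: wt_integral_eq_w0_integrals sum_negf mult.assoc)

end

locale positive_jump_weight =
  fixes \<alpha> :: real and m :: nat and \<omega> t :: "nat \<Rightarrow> real"
  assumes alpha_gt: "\<alpha> > -1"
    and t1_pos: "0 < t 1"
    and t_less_Suc: "\<And>k. 1 \<le> k \<Longrightarrow> k < m \<Longrightarrow> t k < t (Suc k)"
    and partial_sum_nonneg: "\<And>l. l \<le> m \<Longrightarrow> (\<Sum>k=0..l. \<omega> k) \<ge> 0"
    and partial_sum_pos: "\<exists>l\<le>m. (\<Sum>k=0..l. \<omega> k) > 0"
begin

lemma t_mono: "1 \<le> i \<Longrightarrow> i \<le> j \<Longrightarrow> j \<le> m \<Longrightarrow> t i \<le> t j"
proof (induction j)
  case (Suc j)
  then show ?case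
    using t_less_Suc[of j] by (cases "i = Suc j") auto
qed simp

lemma t_pos: "k \<in> {1..m} \<Longrightarrow> t k > 0"
  using t_mono[of 1 k] t1_pos by auto

sublocale jump_weight
proof
  show "\<alpha> > -1"
    by (rule alpha_gt)
  show "0 \<le> t k" if "k \<in> {1..m}" for k
    using t_pos[OF that] by simp
qed

lemma wt_eq_w0_partial_sum_at: "\<exists>l\<le>m. wt \<alpha> m \<omega> t x = w0 \<alpha> x * (\<Sum>k=0..l. \<omega> k)"
proof -
  define S where "S = {k\<in>{0..m}. k = 0 \<or> t k \<le> x}"
  define l where "l = Max S"
  have S: "finite S" "0 \<in> S"
    by (auto simp: S_def)
  then have "l \<in> S"
    unfolding l_def using Max_in by blast
  then have "l \<le> m"
    by (simp add: S_def)
  moreover have "t k \<le> x" if "1 \<le> k" "k \<le> l" for k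
    using that \<open>l \<in> S\<close> \<open>l \<le> m\<close> t_mono[of k l] by (auto simp: S_def)
  moreover have "x < t k" if "l < k" "k \<le> m" for k
  proof (rule ccontr)
    assume "\<not> x < t k"
    then have "k \<in> S"
      using that by (auto simp: S_def)
    then show False
      using that Max_ge[OF S(1)] by (fastforce simp: l_def)
  qed
  ultimately show ?thesis
    using wt_eq_w0_partial_sum by blast
qed

lemma wt_nonneg: "wt \<alpha> m \<omega> t x \<ge> 0"
  using wt_eq_w0_partial_sum_at[of x] partial_sum_nonneg by (auto simp: w0_def)

lemma wt_pos_on_interval:
  obtains a b where "0 \<le> a" "a < b" "\<And>x. a < x \<Longrightarrow> x < b \<Longrightarrow> wt \<alpha> m \<omega> t x > 0"
proof -
  obtain l where l: "l \<le> m" "(\<Sum>k=0..l. \<omega> k) > 0"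
    using partial_sum_pos by blast
  define a where "a = (if l = 0 then 0 else t l)"
  define b where "b = (if l = m then a + 1 else t (Suc l))"
  have "0 \<le> a"
    unfolding a_def using t_pos[of l] l by auto
  moreover have "a < b"
    unfolding a_def b_def using t1_pos t_less_Suc[of l] l by auto
  moreover have "wt \<alpha> m \<omega> t x > 0" if x: "a < x" "x < b" for x
  proof -
    have "t k \<le> x" if "1 \<le> k" "k \<le> l" for k
      using that x t_mono[of k l] l by (auto simp: a_def)
    moreover have "x < t k" if "l < k" "k \<le> m" for k
      using that x t_mono[of "Suc l" k] by (auto simp: b_def)
    ultimately have "wt \<alpha> m \<omega> t x = w0 \<alpha> x * (\<Sum>k=0..l. \<omega> k)"
      using wt_eq_w0_partial_sum l by blast
    moreover have "w0 \<alpha> x > 0"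
      using x \<open>0 \<le> a\<close> by (simp add: w0_def)
    ultimately show ?thesis
      using l by simp
  qed
  ultimately show ?thesis
    using that by blast
qed

lemma wt_integral_square_pos:
  assumes "Q \<noteq> 0"
  shows "L (Q * Q) > 0"
proof -
  obtain a b where ab: "0 \<le> a" "a < b" and wt_pos: "\<And>x. a < x \<Longrightarrow> x < b \<Longrightarrow> wt \<alpha> m \<omega> t x > 0"
    using wt_pos_on_interval by blast
  define f where "f x = indicator {0..} x * (poly (Q * Q) x * wt \<alpha> m \<omega> t x)" for x
  have f_int: "integrable lborel f"
    using set_integrable_poly_wt[of "Q * Q"] unfolding f_def set_integrable_def by simp
  have f_nonneg: "f x \<ge> 0" for x
    unfolding f_def using wt_nonneg[of x] by (simp add: indicator_def)
  have L_eq: "L (Q * Q) = integral\<^sup>L lborel f"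
    unfolding wt_integral_def set_lebesgue_integral_def f_def by simp
  have "L (Q * Q) \<noteq> 0"
  proof
    assume "L (Q * Q) = 0"
    then have "AE x in lborel. f x = 0"
      using integral_nonneg_eq_0_iff_AE[OF f_int] f_nonneg L_eq by simp
    moreover have "AE x in lborel. x \<notin> {x. poly Q x = 0}"
      by (rule AE_not_in[OF finite_imp_null_set_lborel]) (rule poly_roots_finite[OF assms])
    ultimately have "AE x in lborel. x \<notin> {a<..<b}"
    proof eventually_elim
      case (elim x)
      show ?case
      proof
        assume x: "x \<in> {a<..<b}"
        have "poly Q x * poly Q x > 0"
          using elim(2) by (metis mem_Collect_eq not_real_square_gt_zero)
        then have "f x > 0"
          using x wt_pos[of x] ab unfolding f_def by (simp add: indicator_def)
        then show False
          using elim(1) by simp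
      qed
    qed
    then have "emeasure lborel {a<..<b} = 0"
      by (subst (asm) AE_iff_measurable[of "{a<..<b}"]) auto
    then show False
      using ab by simp
  qed
  moreover have "L (Q * Q) \<ge> 0"
    unfolding L_eq using f_nonneg by simp
  ultimately show ?thesis
    by simp
qed

end

lemma degree_le_if_coeff_Suc_eq_0:
  assumes "degree p \<le> Suc k" "coeff p (Suc k) = 0"
  shows "degree p \<le> k"
  using assms by (metis le_SucE leading_coeff_0_iff degree_0 zero_le)

lemma coeff_pCons_0_pderiv: "coeff (pCons 0 (pderiv p)) j = of_nat j * coeff p j"
  by (cases j) (auto simp: coeff_pderiv)

lemma degree_pCons_0_pderiv: "degree (pCons 0 (pderiv (p :: 'a::{idom, ring_char_0} poly))) \<le> degree p"
proof (cases "pderiv p = 0")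
  case False
  then have "degree p \<ge> 1"
    by (metis less_one not_le pderiv_eq_0_iff)
  then show ?thesis
    using False by (simp add: degree_pderiv)
qed simp

locale jump_weight_OPS = positive_jump_weight +
  fixes P :: "nat \<Rightarrow> real poly"
  assumes monic_OPS: "monic_OPS \<alpha> m \<omega> t P"
begin

abbreviation h :: "nat \<Rightarrow> real" where
  "h \<equiv> hn \<alpha> m \<omega> t P"

lemma degree_P: "degree (P n) = n"
  using monic_OPS unfolding monic_OPS_def by auto

lemma coeff_P_self: "coeff (P n) n = 1"
  using monic_OPS unfolding monic_OPS_def by metis

lemma wt_integral_P_mult_monom: "j < n \<Longrightarrow> L (P n * monom c j) = 0"
  using monic_OPS unfolding monic_OPS_def wt_integral_def
  by (simp add: poly_monom mult_ac)

lemma wt_integral_P_mult_eq_0: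
  assumes "degree Q < n"
  shows "L (P n * Q) = 0"
proof -
  have "Q = (\<Sum>i\<le>n-1. monom (coeff Q i) i)"
    using assms by (intro poly_as_sum_of_monoms'[symmetric]) auto
  then have "L (P n * Q) = (\<Sum>i\<le>n-1. L (P n * monom (coeff Q i) i))"
    by (metis wt_integral_sum sum_distrib_left)
  also have "\<dots> = 0"
    using assms by (intro sum.neutral) (auto intro!: wt_integral_P_mult_monom)
  finally show ?thesis .
qed

lemma h_eq_wt_integral: "h j = L (P j * P j)"
  unfolding hn_def wt_integral_def by (simp add: power2_eq_square)

lemma wt_integral_P_mult:
  assumes "degree Q \<le> j"
  shows "L (P j * Q) = coeff Q j * h j"
proof -
  define D where "D = Q - smult (coeff Q j) (P j)"
  have "degree D \<le> j"
    unfolding D_def using assms degree_P[of j]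
    by (intro degree_diff_le) (auto intro: order_trans[OF degree_smult_le])
  moreover have "coeff D j = 0"
    unfolding D_def by (simp add: coeff_P_self)
  ultimately have "degree D < j \<or> D = 0"
    by (metis le_neq_implies_less leading_coeff_0_iff)
  then have "L (P j * D) = 0"
    by (auto simp: wt_integral_P_mult_eq_0 wt_integral_0)
  moreover have "P j * Q = smult (coeff Q j) (P j * P j) + P j * D"
    unfolding D_def by (simp add: algebra_simps)
  ultimately show ?thesis
    by (simp add: wt_integral_add wt_integral_smult h_eq_wt_integral)
qed

lemma h_pos: "h j > 0"
proof -
  have "P j \<noteq> 0"
    using coeff_P_self[of j] by auto
  then show ?thesis
    using wt_integral_square_pos h_eq_wt_integral by simp
qed

lemma subleading_coeff_h_plus_h_Suc:
  "coeff (P (Suc k)) k * h k + h (Suc k) =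
     (\<Sum>i=1..m. \<omega> i * t i * w0 \<alpha> (t i) * poly (P (Suc k) * P k) (t i))"
proof -
  define n where "n = Suc k"
  define D where "D = pCons 0 (pderiv (P n)) - smult (of_nat n) (P n)"
  have "degree D \<le> k"
  proof (rule degree_le_if_coeff_Suc_eq_0)
    show "degree D \<le> Suc k"
      unfolding D_def n_def using degree_pCons_0_pderiv[of "P (Suc k)"] degree_P[of "Suc k"]
      by (intro degree_diff_le) (auto intro: order_trans[OF degree_smult_le])
    show "coeff D (Suc k) = 0"
      unfolding D_def n_def by (simp add: coeff_pderiv coeff_P_self)
  qed
  moreover have "coeff D k = - coeff (P n) k"
    unfolding D_def n_def by (simp add: coeff_pCons_0_pderiv algebra_simps)
  moreover have orth: "L (P n * P k) = 0"
    unfolding n_def by (simp add: wt_integral_P_mult_eq_0 degree_P)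
  moreover have "P k * pCons 0 (pderiv (P n)) = smult (of_nat n) (P n * P k) + P k * D"
    unfolding D_def by (simp add: algebra_simps)
  ultimately have deriv_term: "L (P k * pCons 0 (pderiv (P n))) = - coeff (P n) k * h k"
    using wt_integral_P_mult by (simp add: wt_integral_add wt_integral_smult)
  have "L (P n * pCons 0 (pderiv (P k))) = 0"
    by (rule wt_integral_P_mult_eq_0)
       (use degree_pCons_0_pderiv[of "P k"] in \<open>simp add: degree_P n_def\<close>)
  moreover have "L (P n * pCons 0 (P k)) = h n"
    using wt_integral_P_mult[of "pCons 0 (P k)" n]
    by (simp add: n_def degree_P degree_pCons_eq_if coeff_P_self)
  ultimately have "L (lag_deriv_poly \<alpha> (P n * P k)) = - coeff (P n) k * h k - h n"
    unfolding lag_deriv_poly_mult wt_integral_diff wt_integral_add wt_integral_smult deriv_term orth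
    by simp
  then show ?thesis
    using wt_integral_lag_deriv_poly[of "P n * P k"] by (simp add: n_def sum_negf)
qed

text \<open>The coefficient \<open>p(j)\<close> of \<open>x^(j-1)\<close> in \<open>P\<^sub>j\<close>, written with \<open>pCons\<close> so that it is \<open>0\<close>
  for \<open>j = 0\<close> rather than the leading coefficient at the truncated index \<open>0 - 1\<close>.\<close>
definition subcoeff :: "nat \<Rightarrow> real" where
  "subcoeff j = coeff (pCons 0 (P j)) j"

lemma subcoeff_diff_mult_h:
  "(2 * real j + \<alpha> + 1 - (subcoeff j - subcoeff (Suc j))) * h j =
     - (\<Sum>i=1..m. \<omega> i * t i * w0 \<alpha> (t i) * (poly (P j) (t i))\<^sup>2)"
proof -
  define D where "D = pCons 0 (P j) - P (Suc j)"
  have "degree D \<le> j"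
  proof (rule degree_le_if_coeff_Suc_eq_0)
    show "degree D \<le> Suc j"
      unfolding D_def using degree_P[of j] degree_P[of "Suc j"]
      by (intro degree_diff_le) (auto intro: order_trans[OF degree_pCons_le])
    show "coeff D (Suc j) = 0"
      unfolding D_def by (simp add: coeff_P_self)
  qed
  moreover have "coeff D j = subcoeff j - subcoeff (Suc j)"
    unfolding D_def subcoeff_def by simp
  moreover have "L (P j * P (Suc j)) = 0"
    using wt_integral_P_mult_eq_0[of "P j" "Suc j"] by (simp add: degree_P mult.commute)
  moreover have "P j * pCons 0 (P j) = P j * D + P j * P (Suc j)"
    unfolding D_def by (simp add: algebra_simps)
  ultimately have shift_term: "L (P j * pCons 0 (P j)) = (subcoeff j - subcoeff (Suc j)) * h j"
    using wt_integral_P_mult by (simp add: wt_integral_add)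
  have deriv_term: "L (P j * pCons 0 (pderiv (P j))) = real j * h j"
    using wt_integral_P_mult[OF degree_pCons_0_pderiv[of "P j", unfolded degree_P]]
    by (simp add: coeff_pCons_0_pderiv coeff_P_self)
  have "L (lag_deriv_poly \<alpha> (P j * P j)) =
          (2 * real j + \<alpha> + 1 - (subcoeff j - subcoeff (Suc j))) * h j"
    unfolding lag_deriv_poly_mult wt_integral_diff wt_integral_add wt_integral_smult
      shift_term deriv_term h_eq_wt_integral[symmetric]
    by (simp add: algebra_simps)
  then show ?thesis
    using wt_integral_lag_deriv_poly[of "P j * P j"] by (simp add: power2_eq_square)
qed

lemma subcoeff_Suc:
  "subcoeff (Suc j) = subcoeff j - (2 * real j + \<alpha> + 1) - (\<Sum>i=1..m. t i * Rnk \<alpha> m \<omega> t P j i)"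
proof -
  have "(\<Sum>i=1..m. \<omega> i * t i * w0 \<alpha> (t i) * (poly (P j) (t i))\<^sup>2) =
          (\<Sum>i=1..m. t i * Rnk \<alpha> m \<omega> t P j i) * h j"
    using h_pos[of j] unfolding sum_distrib_right Rnk_def by (intro sum.cong refl) simp
  then have "(2 * real j + \<alpha> + 1 - (subcoeff j - subcoeff (Suc j))) * h j =
               - (\<Sum>i=1..m. t i * Rnk \<alpha> m \<omega> t P j i) * h j"
    using subcoeff_diff_mult_h[of j] by simp
  then have "2 * real j + \<alpha> + 1 - (subcoeff j - subcoeff (Suc j)) =
               - (\<Sum>i=1..m. t i * Rnk \<alpha> m \<omega> t P j i)"
    using h_pos[of j] by (metis mult_minus_left mult_right_cancel order_less_irrefl)
  then show ?thesis
    by simp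
qed

lemma subcoeff_eq:
  "subcoeff n = - (\<Sum>j<n. \<Sum>i=1..m. t i * Rnk \<alpha> m \<omega> t P j i) - real n * (real n + \<alpha>)"
proof (induction n)
  case 0
  then show ?case
    by (simp add: subcoeff_def)
next
  case (Suc n)
  then show ?case
    by (simp add: subcoeff_Suc algebra_simps)
qed

lemma subleading_coeff_eq_rnk_sum:
  assumes "n \<ge> 1"
  shows "coeff (P n) (n - 1) = (\<Sum>k=1..m. t k * rnk \<alpha> m \<omega> t P n k) - betan \<alpha> m \<omega> t P n"
proof -
  obtain j where n: "n = Suc j"
    using assms by (cases n) auto
  have "(\<Sum>i=1..m. t i * rnk \<alpha> m \<omega> t P n i) =
          (\<Sum>i=1..m. \<omega> i * t i * w0 \<alpha> (t i) * poly (P n * P j) (t i)) / h j"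
    unfolding sum_divide_distrib rnk_def n by (intro sum.cong refl) (simp add: field_simps)
  also have "\<dots> = coeff (P n) j + h n / h j"
    using subleading_coeff_h_plus_h_Suc[of j] h_pos[of j] n by (simp add: field_simps)
  finally show ?thesis
    unfolding betan_def n by simp
qed

lemma subleading_coeff_eq_Rnk_sum:
  assumes "n \<ge> 1"
  shows "coeff (P n) (n - 1) =
           - (\<Sum>k=1..m. t k * (\<Sum>j=0..n-1. Rnk \<alpha> m \<omega> t P j k)) - real n * (real n + \<alpha>)"
proof -
  have "{0..n-1} = {..<n}"
    using assms by auto
  then have "(\<Sum>k=1..m. t k * (\<Sum>j=0..n-1. Rnk \<alpha> m \<omega> t P j k)) =
               (\<Sum>j<n. \<Sum>k=1..m. t k * Rnk \<alpha> m \<omega> t P j k)"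
    by (simp add: sum_distrib_left) (rule sum.swap)
  moreover have "coeff (P n) (n - 1) = subcoeff n"
    using assms by (cases n) (simp_all add: subcoeff_def)
  ultimately show ?thesis
    using subcoeff_eq[of n] by simp
qed

end

theorem lemma2p7:
  fixes \<alpha> :: real and m n :: nat and \<omega> t :: "nat \<Rightarrow> real" and P :: "nat \<Rightarrow> real poly"
  assumes "m \<ge> 1" and "\<alpha> > -1"
    and "0 < t 1" and "\<And>k. 1 \<le> k \<Longrightarrow> k < m \<Longrightarrow> t k < t (Suc k)"
    and "\<And>l. l \<le> m \<Longrightarrow> (\<Sum>k=0..l. \<omega> k) \<ge> 0"
    and "\<exists>l\<le>m. (\<Sum>k=0..l. \<omega> k) > 0"
    and "monic_OPS \<alpha> m \<omega> t P"
    and "n \<ge> 1"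
  shows "coeff (P n) (n - 1) = (\<Sum>k=1..m. t k * rnk \<alpha> m \<omega> t P n k) - betan \<alpha> m \<omega> t P n
       \<and> coeff (P n) (n - 1) = - (\<Sum>k=1..m. t k * (\<Sum>j=0..n-1. Rnk \<alpha> m \<omega> t P j k)) - real n * (real n + \<alpha>)"
proof -
  interpret jump_weight_OPS \<alpha> m \<omega> t P
    using assms(2-7) by unfold_locales
  show ?thesis
    using subleading_coeff_eq_rnk_sum[OF assms(8)] subleading_coeff_eq_Rnk_sum[OF assms(8)] by simp
qed

end
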